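(* Let $c,\alpha,\beta>0$, $\mathbf A\in\mathbb{R}^{2\times2}$ symmetric positive definite, $\rho>0$, $\mathbf m\in\mathbb{R}^2$, $H\in\mathbb{R}$, and let $$\phi(\tilde\rho)=\rho+c\big\langle(2c\alpha\mathbf A+\tilde\rho\mathbf I)^{-1}\mathbf m,\ \alpha\mathbf A(2c\alpha\mathbf A+\tilde\rho\mathbf I)^{-1}\mathbf m\big\rangle+c\,(2c\beta+\tilde\rho)^{-2}\beta H^2.$$ If $c$ is large enough that $\frac{1}{4c^2}\big(\mathbf m^{\mathrm T}(\alpha\mathbf A)^{-2}\mathbf m+\beta^{-2}H^2\big)<1$, then for every initial guess $\tilde\rho^{(0)}\in(0,\infty)$ the iteration $\tilde\rho^{(\ell+1)}=\phi(\tilde\rho^{(\ell)})$, $\ell=0,1,2,\dots$, converges to the unique fixed point $\rho^*\in(0,\infty)$ of $\phi$.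
   Context: None beyond the statement: $\mathbf I$ is the $2\times2$ identity and $\langle\cdot,\cdot\rangle$ the Euclidean inner product. (The fixed point $\rho^*$ is the density component of the proximal operator of the WFR cost $J(\mathbf m,\rho,H)=\alpha\rho^{-1}\mathbf m^{\mathrm T}\mathbf A\mathbf m+\beta\rho^{-1}H^2$.) *)

theory Defs
  imports "HOL-Analysis.Analysis"
begin

definition spd2 :: "real^2^2 \<Rightarrow> bool" where
  "spd2 A \<longleftrightarrow> transpose A = A \<and> (\<forall>x::real^2. x \<noteq> 0 \<longrightarrow> x \<bullet> (A *v x) > 0)"

definition wfr_phi ::
  "real \<Rightarrow> real \<Rightarrow> real \<Rightarrow> real^2^2 \<Rightarrow> real \<Rightarrow> real^2 \<Rightarrow> real \<Rightarrow> real \<Rightarrow> real" where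
  "wfr_phi c \<alpha> \<beta> A \<rho> m H \<rho>t =
     (let B = matrix_inv ((2 * c * \<alpha>) *\<^sub>R A + \<rho>t *\<^sub>R mat 1) in
      \<rho> + c * ((B *v m) \<bullet> ((\<alpha> *\<^sub>R A) *v (B *v m)))
        + c * (inverse ((2 * c * \<beta> + \<rho>t)\<^sup>2)) * \<beta> * H\<^sup>2)"

end

theory Submission
  imports Defs
begin

text \<open>
  In an orthonormal eigenbasis \<open>e\<^sub>1, e\<^sub>2\<close> of \<open>A\<close> with eigenvalues \<open>l\<^sub>1, l\<^sub>2 > 0\<close>, for
  \<open>r \<ge> 0\<close> the map becomes \<open>\<phi>(r) = \<rho> + \<Sum>\<^sub>i a\<^sub>i / (b\<^sub>i + r)\<^sup>2\<close> with
  \<open>a\<^sub>i = c \<alpha> l\<^sub>i (m \<bullet> e\<^sub>i)\<^sup>2\<close>, \<open>b\<^sub>i = 2 c \<alpha> l\<^sub>i\<close> for \<open>i = 1, 2\<close> and \<open>a\<^sub>3 = c \<beta> H\<^sup>2\<close>,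
  \<open>b\<^sub>3 = 2 c \<beta>\<close>. Each term \<open>a / (b + r)\<^sup>2\<close> is \<open>2 a / b\<^sup>3\<close>-Lipschitz on \<open>[0, \<infinity>)\<close>, and
  \<open>\<Sum>\<^sub>i 2 a\<^sub>i / b\<^sub>i\<^sup>3\<close> is exactly the quantity assumed to be \<open>< 1\<close>. Hence \<open>\<phi>\<close> is a
  contraction of \<open>[0, \<infinity>)\<close> into \<open>[\<rho>, \<infinity>)\<close>, and Banach's fixed point theorem gives the
  unique fixed point, which is \<open>\<ge> \<rho> > 0\<close>, together with convergence of the iteration.
\<close>

lemma inverse_square_shift_lipschitz:
  fixes b :: real
  assumes "b > 0"
  shows "(2 / b ^ 3)-lipschitz_on {0..} (\<lambda>r. 1 / (b + r)\<^sup>2)"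
proof (rule lipschitz_on_leI)
  fix r s :: real
  assume "r \<in> {0..}" "s \<in> {0..}" "r \<le> s"
  then have r: "r \<ge> 0" and rs: "r \<le> s" by auto
  have "1 / X\<^sup>2 - 1 / Y\<^sup>2 = (Y - X) * (1 / (X\<^sup>2 * Y) + 1 / (X * Y\<^sup>2))"
    if "X > 0" "Y > 0" for X Y :: real
    using that by (simp add: field_simps power2_eq_square)
  from this[of "b + r" "b + s"]
  have "1 / (b + r)\<^sup>2 - 1 / (b + s)\<^sup>2 = (s - r) * (1 / ((b + r)\<^sup>2 * (b + s)) + 1 / ((b + r) * (b + s)\<^sup>2))"
    using assms r rs by simp
  also have "\<dots> \<le> (s - r) * (1 / b ^ 3 + 1 / b ^ 3)"
  proof -
    have cube: "b ^ 3 \<le> (b + x)\<^sup>2 * (b + y)" if "x \<ge> 0" "y \<ge> 0" for x y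
    proof -
      have "b ^ 3 = b\<^sup>2 * b"
        by (simp add: power2_eq_square power3_eq_cube)
      also have "\<dots> \<le> (b + x)\<^sup>2 * (b + y)"
        using assms that by (intro mult_mono power_mono) auto
      finally show ?thesis .
    qed
    from cube[of r s] cube[of s r] show ?thesis
      using assms r rs by (intro mult_left_mono add_mono divide_left_mono) (auto simp: mult.commute)
  qed
  finally have "1 / (b + r)\<^sup>2 - 1 / (b + s)\<^sup>2 \<le> 2 / b ^ 3 * (s - r)"
    by (simp add: field_simps)
  moreover have "1 / (b + s)\<^sup>2 \<le> 1 / (b + r)\<^sup>2"
    using assms r rs by (intro divide_left_mono power_mono mult_pos_pos) auto
  ultimately show "dist (1 / (b + r)\<^sup>2) (1 / (b + s)\<^sup>2) \<le> 2 / b ^ 3 * dist r s"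
    using rs by (simp add: dist_real_def)
qed (use assms in simp)

lemma weighted_inverse_square_shift_lipschitz:
  fixes a b :: real
  assumes "a \<ge> 0" and "b > 0"
  shows "(2 * a / b ^ 3)-lipschitz_on {0..} (\<lambda>r. a / (b + r)\<^sup>2)"
  using lipschitz_on_cmult_real_nonneg[OF inverse_square_shift_lipschitz[OF \<open>b > 0\<close>] \<open>a \<ge> 0\<close>]
  by (simp add: mult.commute)

lemma contraction_iterates_tendsto_fixpoint:
  fixes f :: "'a::metric_space \<Rightarrow> 'a"
  assumes lip: "q-lipschitz_on S f" and "q < 1" and maps: "f ` S \<subseteq> S"
    and "x0 \<in> S" and "x \<in> S" and "f x = x"
  shows "(\<lambda>n. (f ^^ n) x0) \<longlonglongrightarrow> x"
proof -
  have q: "q \<ge> 0"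
    using lip by (rule lipschitz_on_nonneg)
  have iterate_in: "(f ^^ n) x0 \<in> S" for n
    by (induction n) (use maps \<open>x0 \<in> S\<close> in auto)
  have bound: "dist ((f ^^ n) x0) x \<le> q ^ n * dist x0 x" for n
  proof (induction n)
    case 0
    then show ?case by simp
  next
    case (Suc n)
    have "dist ((f ^^ Suc n) x0) x = dist (f ((f ^^ n) x0)) (f x)"
      using \<open>f x = x\<close> by simp
    also have "\<dots> \<le> q * dist ((f ^^ n) x0) x"
      using lip iterate_in \<open>x \<in> S\<close> by (rule lipschitz_onD)
    also have "\<dots> \<le> q * (q ^ n * dist x0 x)"
      using Suc q by (rule mult_left_mono)
    finally show ?case
      by (simp add: mult.assoc)
  qed
  have "(\<lambda>n. q ^ n * dist x0 x) \<longlonglongrightarrow> 0"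
    using LIMSEQ_power_zero[of q] q \<open>q < 1\<close> by (intro tendsto_mult_left_zero) simp
  then have "(\<lambda>n. dist ((f ^^ n) x0) x) \<longlonglongrightarrow> 0"
    by (rule Lim_null_comparison[rotated]) (simp add: bound)
  then show ?thesis
    by (rule tendsto_dist_iff[THEN iffD2])
qed

lemma contraction_of_nonneg_reals_fixpoint:
  fixes f :: "real \<Rightarrow> real"
  assumes lip: "q-lipschitz_on {0..} f" and "q < 1"
    and lower: "\<And>r. r \<ge> 0 \<Longrightarrow> \<rho> \<le> f r" and "\<rho> > 0"
  shows "\<exists>x>0. f x = x \<and> (\<forall>r. r > 0 \<and> f r = r \<longrightarrow> r = x)
           \<and> (\<forall>x0>0. (\<lambda>n. (f ^^ n) x0) \<longlonglongrightarrow> x)"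
proof -
  have "f r \<ge> 0" if "r \<ge> 0" for r
    using lower[OF that] \<open>\<rho> > 0\<close> by linarith
  then have maps: "f ` {0..} \<subseteq> {0..}"
    by auto
  have "\<exists>!x\<in>{0..}. f x = x"
  proof (rule Banach_fix[OF _ _ _ \<open>q < 1\<close> maps])
    show "complete {0::real..}"
      by (simp add: complete_eq_closed)
    show "q \<ge> 0"
      using lip by (rule lipschitz_on_nonneg)
    show "dist (f x) (f y) \<le> q * dist x y" if "x \<in> {0..}" "y \<in> {0..}" for x y
      using lip that by (rule lipschitz_onD)
  qed simp
  then obtain x where x: "x \<ge> 0" "f x = x"
    and unique: "\<And>y. y \<ge> 0 \<Longrightarrow> f y = y \<Longrightarrow> y = x"
    by (metis atLeast_iff)
  show ?thesis
  proof (intro exI[of _ x] conjI allI impI)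
    show "x > 0"
      using lower[OF \<open>x \<ge> 0\<close>] \<open>f x = x\<close> \<open>\<rho> > 0\<close> by linarith
    show "f x = x"
      by fact
    show "r = x" if "r > 0 \<and> f r = r" for r
      using unique that by simp
    show "(\<lambda>n. (f ^^ n) x0) \<longlonglongrightarrow> x" if "x0 > 0" for x0
      using that x by (intro contraction_iterates_tendsto_fixpoint[OF lip \<open>q < 1\<close> maps]) simp_all
  qed
qed

lemma matrix_inv_mult_left:
  fixes N :: "'a::semiring_1^'n^'m"
  assumes "invertible N"
  shows "matrix_inv N ** N = mat 1"
proof -
  have "N ** matrix_inv N = mat 1 \<and> matrix_inv N ** N = mat 1"
    using assms unfolding invertible_def matrix_inv_def by (rule someI_ex)
  then show ?thesis ..
qed

lemma matrix_inv_eigenvector: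
  fixes N :: "real^'n^'n"
  assumes "invertible N" and "N *v v = \<mu> *\<^sub>R v" and "\<mu> \<noteq> 0"
  shows "matrix_inv N *v v = inverse \<mu> *\<^sub>R v"
proof -
  have "matrix_inv N *v v = matrix_inv N *v (N *v (inverse \<mu> *\<^sub>R v))"
    using assms by (simp add: matrix_vector_mult_scaleR)
  also have "\<dots> = inverse \<mu> *\<^sub>R v"
    by (simp add: matrix_vector_mul_assoc matrix_inv_mult_left[OF assms(1)])
  finally show ?thesis .
qed

locale orthonormal_basis_2 =
  fixes e1 e2 :: "real^2"
  assumes unit1 [simp]: "e1 \<bullet> e1 = 1" and unit2 [simp]: "e2 \<bullet> e2 = 1"
    and orthogonal: "e1 \<bullet> e2 = 0"
    and expansion: "\<And>x. x = (x \<bullet> e1) *\<^sub>R e1 + (x \<bullet> e2) *\<^sub>R e2"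
begin

lemma coordinates [simp]:
  "(a *\<^sub>R e1 + b *\<^sub>R e2) \<bullet> e1 = a" "(a *\<^sub>R e1 + b *\<^sub>R e2) \<bullet> e2 = b"
  using orthogonal by (simp_all add: inner_add_left inner_commute[of e2 e1])

lemma inner_coordinates: "x \<bullet> y = (x \<bullet> e1) * (y \<bullet> e1) + (x \<bullet> e2) * (y \<bullet> e2)"
proof -
  have "x \<bullet> y = x \<bullet> ((y \<bullet> e1) *\<^sub>R e1 + (y \<bullet> e2) *\<^sub>R e2)"
    by (rule arg_cong[OF expansion])
  then show ?thesis
    by (simp add: inner_add_right mult.commute)
qed

context
  fixes N :: "real^2^2" and \<mu>1 \<mu>2 :: real
  assumes eigen1: "N *v e1 = \<mu>1 *\<^sub>R e1" and eigen2: "N *v e2 = \<mu>2 *\<^sub>R e2"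
begin

lemma diagonal_matrix_vector:
  "N *v x = (\<mu>1 * (x \<bullet> e1)) *\<^sub>R e1 + (\<mu>2 * (x \<bullet> e2)) *\<^sub>R e2"
proof -
  have "N *v x = N *v ((x \<bullet> e1) *\<^sub>R e1 + (x \<bullet> e2) *\<^sub>R e2)"
    by (rule arg_cong[OF expansion])
  then show ?thesis
    by (simp add: matrix_vector_right_distrib matrix_vector_mult_scaleR eigen1 eigen2 mult.commute)
qed

lemma diagonal_quadratic_form: "x \<bullet> (N *v x) = \<mu>1 * (x \<bullet> e1)\<^sup>2 + \<mu>2 * (x \<bullet> e2)\<^sup>2"
  unfolding inner_coordinates[of x "N *v x"] by (simp add: diagonal_matrix_vector power2_eq_square)

lemma diagonal_matrix_inv:
  assumes "\<mu>1 \<noteq> 0" and "\<mu>2 \<noteq> 0"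
  shows "matrix_inv N *v e1 = inverse \<mu>1 *\<^sub>R e1" and "matrix_inv N *v e2 = inverse \<mu>2 *\<^sub>R e2"
proof -
  have "x = 0" if "N *v x = 0" for x
  proof -
    have "x \<bullet> e1 = 0" "x \<bullet> e2 = 0"
      using arg_cong[OF that, of "\<lambda>y. y \<bullet> e1"] arg_cong[OF that, of "\<lambda>y. y \<bullet> e2"] assms
      by (simp_all add: diagonal_matrix_vector)
    with expansion[of x] show "x = 0"
      by (metis add_0 scaleR_zero_left)
  qed
  then have "invertible N"
    by (simp add: invertible_left_inverse matrix_left_invertible_ker)
  then show "matrix_inv N *v e1 = inverse \<mu>1 *\<^sub>R e1" "matrix_inv N *v e2 = inverse \<mu>2 *\<^sub>R e2"
    using assms eigen1 eigen2 by (simp_all add: matrix_inv_eigenvector)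
qed

end

lemma diagonal_matrix_inv_square_quadratic_form:
  assumes "N *v e1 = \<mu>1 *\<^sub>R e1" and "N *v e2 = \<mu>2 *\<^sub>R e2" and "\<mu>1 \<noteq> 0" and "\<mu>2 \<noteq> 0"
  shows "x \<bullet> ((matrix_inv N ** matrix_inv N) *v x) = (x \<bullet> e1)\<^sup>2 / \<mu>1\<^sup>2 + (x \<bullet> e2)\<^sup>2 / \<mu>2\<^sup>2"
proof -
  have "(matrix_inv N ** matrix_inv N) *v e1 = (inverse \<mu>1)\<^sup>2 *\<^sub>R e1"
    and "(matrix_inv N ** matrix_inv N) *v e2 = (inverse \<mu>2)\<^sup>2 *\<^sub>R e2"
    by (simp_all add: diagonal_matrix_inv[OF assms] power2_eq_square matrix_vector_mult_scaleR
        flip: matrix_vector_mul_assoc)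
  then have "x \<bullet> ((matrix_inv N ** matrix_inv N) *v x)
      = (inverse \<mu>1)\<^sup>2 * (x \<bullet> e1)\<^sup>2 + (inverse \<mu>2)\<^sup>2 * (x \<bullet> e2)\<^sup>2"
    by (rule diagonal_quadratic_form)
  then show ?thesis
    by (simp add: power_inverse divide_inverse mult.commute)
qed

end

lemma symmetric_2x2_unit_eigenvectors:
  fixes a b d :: real
  obtains u w l1 l2 where "u\<^sup>2 + w\<^sup>2 = 1"
    and "a * u + b * w = l1 * u" and "b * u + d * w = l1 * w"
    and "a * (-w) + b * u = l2 * (-w)" and "b * (-w) + d * u = l2 * u"
proof (cases "b = 0")
  case True
  then show ?thesis
    using that[of 1 0 a d] by simp
next
  case False
  define \<delta> where "\<delta> = sqrt (((a - d) / 2)\<^sup>2 + b\<^sup>2)"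
  define l1 where "l1 = (a + d) / 2 + \<delta>"
  define n where "n = sqrt (b\<^sup>2 + (l1 - a)\<^sup>2)"
  have "n > 0"
    unfolding n_def using False by (simp add: add_pos_nonneg)
  have n2: "n\<^sup>2 = b\<^sup>2 + (l1 - a)\<^sup>2"
    unfolding n_def by simp
  have char: "(l1 - a) * (l1 - d) = b\<^sup>2"
  proof -
    have "\<delta>\<^sup>2 = ((a - d) / 2)\<^sup>2 + b\<^sup>2"
      unfolding \<delta>_def by simp
    then show ?thesis
      unfolding l1_def by (simp add: algebra_simps power2_eq_square) (simp add: field_simps)
  qed
  show ?thesis
  proof (rule that[of "b / n" "(l1 - a) / n" l1 "a + d - l1"])
    show "(b / n)\<^sup>2 + ((l1 - a) / n)\<^sup>2 = 1"
      using \<open>n > 0\<close> n2 False by (simp add: power_divide flip: add_divide_distrib)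
  qed (use \<open>n > 0\<close> char in \<open>simp_all add: field_simps power2_eq_square\<close>)
qed

lemma symmetric_2x2_eigenbasis:
  fixes A :: "real^2^2"
  assumes "transpose A = A"
  obtains e1 e2 l1 l2 where "orthonormal_basis_2 e1 e2"
    and "A *v e1 = l1 *\<^sub>R e1" and "A *v e2 = l2 *\<^sub>R e2"
proof -
  have "A$2$1 = A$1$2"
    using arg_cong[OF assms, of "\<lambda>M. M$2$1"] by (simp add: transpose_def)
  moreover obtain u w l1 l2 where unit: "u\<^sup>2 + w\<^sup>2 = 1"
    and "A$1$1 * u + A$1$2 * w = l1 * u" and "A$1$2 * u + A$2$2 * w = l1 * w"
    and "A$1$1 * (-w) + A$1$2 * u = l2 * (-w)" and "A$1$2 * (-w) + A$2$2 * u = l2 * u"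
    by (rule symmetric_2x2_unit_eigenvectors)
  ultimately have "A *v vector [u, w] = l1 *\<^sub>R vector [u, w]"
    and "A *v vector [-w, u] = l2 *\<^sub>R vector [-w, u]"
    by (auto simp: vec_eq_iff forall_2 matrix_vector_mult_def sum_2 algebra_simps)
  moreover have "orthonormal_basis_2 (vector [u, w]) (vector [-w, u])"
  proof
    fix x :: "real^2"
    have "x$1 = x$1 * (u\<^sup>2 + w\<^sup>2)" "x$2 = x$2 * (u\<^sup>2 + w\<^sup>2)"
      using unit by simp_all
    then show "x = (x \<bullet> vector [u, w]) *\<^sub>R vector [u, w] + (x \<bullet> vector [-w, u]) *\<^sub>R vector [-w, u]"
      by (simp add: vec_eq_iff forall_2 inner_vec_def sum_2 power2_eq_square algebra_simps)
  qed (use unit in \<open>simp_all add: inner_vec_def sum_2 power2_eq_square algebra_simps\<close>)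
  ultimately show ?thesis
    using that by blast
qed

lemma spd2_eigenbasis:
  assumes "spd2 A"
  obtains e1 e2 l1 l2 where "orthonormal_basis_2 e1 e2"
    and "A *v e1 = l1 *\<^sub>R e1" and "A *v e2 = l2 *\<^sub>R e2" and "l1 > 0" and "l2 > 0"
proof -
  obtain e1 e2 l1 l2 where basis: "orthonormal_basis_2 e1 e2"
    and eigen: "A *v e1 = l1 *\<^sub>R e1" "A *v e2 = l2 *\<^sub>R e2"
    using assms symmetric_2x2_eigenbasis unfolding spd2_def by blast
  have "e \<bullet> (A *v e) > 0" if "e \<bullet> e = 1" for e
    using assms that unfolding spd2_def by (metis inner_zero_left zero_neq_one)
  then have "l1 > 0" "l2 > 0"
    using eigen orthonormal_basis_2.unit1[OF basis] orthonormal_basis_2.unit2[OF basis]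
    by (metis inner_scaleR_right mult.right_neutral)+
  with basis eigen show ?thesis
    using that by blast
qed

definition wfr_contraction_constant :: "real \<Rightarrow> real \<Rightarrow> real \<Rightarrow> real^2^2 \<Rightarrow> real^2 \<Rightarrow> real \<Rightarrow> real"
  where "wfr_contraction_constant c \<alpha> \<beta> A m H =
    (1 / (4 * c\<^sup>2)) * (m \<bullet> ((matrix_inv (\<alpha> *\<^sub>R A) ** matrix_inv (\<alpha> *\<^sub>R A)) *v m) + inverse (\<beta>\<^sup>2) * H\<^sup>2)"

lemma (in orthonormal_basis_2) wfr_phi_eigen_form:
  assumes A: "A *v e1 = l1 *\<^sub>R e1" "A *v e2 = l2 *\<^sub>R e2"
    and nonzero: "2 * c * \<alpha> * l1 + r \<noteq> 0" "2 * c * \<alpha> * l2 + r \<noteq> 0"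
  shows "wfr_phi c \<alpha> \<beta> A \<rho> m H r = \<rho> + c * \<alpha> * l1 * (m \<bullet> e1)\<^sup>2 / (2 * c * \<alpha> * l1 + r)\<^sup>2
           + c * \<alpha> * l2 * (m \<bullet> e2)\<^sup>2 / (2 * c * \<alpha> * l2 + r)\<^sup>2 + c * \<beta> * H\<^sup>2 / (2 * c * \<beta> + r)\<^sup>2"
proof -
  define K where "K = (2 * c * \<alpha>) *\<^sub>R A + r *\<^sub>R mat 1"
  have K: "K *v e1 = (2 * c * \<alpha> * l1 + r) *\<^sub>R e1" "K *v e2 = (2 * c * \<alpha> * l2 + r) *\<^sub>R e2"
    unfolding K_def by (simp_all add: matrix_vector_mult_add_rdistrib A scaleR_add_left
        flip: scaleR_matrix_vector_assoc)
  define v where "v = matrix_inv K *v m"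
  have v: "v \<bullet> e1 = (m \<bullet> e1) / (2 * c * \<alpha> * l1 + r)" "v \<bullet> e2 = (m \<bullet> e2) / (2 * c * \<alpha> * l2 + r)"
    unfolding v_def diagonal_matrix_vector[OF diagonal_matrix_inv[OF K nonzero]]
    by (simp_all add: field_simps)
  have "v \<bullet> ((\<alpha> *\<^sub>R A) *v v) = \<alpha> * l1 * (v \<bullet> e1)\<^sup>2 + \<alpha> * l2 * (v \<bullet> e2)\<^sup>2"
    by (rule diagonal_quadratic_form) (simp_all add: A flip: scaleR_matrix_vector_assoc)
  then show ?thesis
    unfolding wfr_phi_def Let_def K_def[symmetric] v_def[symmetric] v
    by (simp add: power_divide field_simps)
qed

lemma wfr_phi_inverse_square_sum:
  assumes "c > 0" and "\<alpha> > 0" and "\<beta> > 0" and "spd2 A"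
  obtains a1 a2 a3 b1 b2 b3 :: real
  where "a1 \<ge> 0" "a2 \<ge> 0" "a3 \<ge> 0" "b1 > 0" "b2 > 0" "b3 > 0"
    and "\<And>r. r \<ge> 0 \<Longrightarrow>
      wfr_phi c \<alpha> \<beta> A \<rho> m H r = \<rho> + a1 / (b1 + r)\<^sup>2 + a2 / (b2 + r)\<^sup>2 + a3 / (b3 + r)\<^sup>2"
    and "wfr_contraction_constant c \<alpha> \<beta> A m H = 2 * a1 / b1 ^ 3 + 2 * a2 / b2 ^ 3 + 2 * a3 / b3 ^ 3"
proof -
  obtain e1 e2 l1 l2 where basis: "orthonormal_basis_2 e1 e2"
    and A: "A *v e1 = l1 *\<^sub>R e1" "A *v e2 = l2 *\<^sub>R e2" and "l1 > 0" "l2 > 0"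
    using spd2_eigenbasis[OF \<open>spd2 A\<close>] .
  interpret orthonormal_basis_2 e1 e2
    by (fact basis)
  have "(\<alpha> *\<^sub>R A) *v e1 = (\<alpha> * l1) *\<^sub>R e1" "(\<alpha> *\<^sub>R A) *v e2 = (\<alpha> * l2) *\<^sub>R e2"
    using A by (simp_all flip: scaleR_matrix_vector_assoc)
  then have quadratic_form: "m \<bullet> ((matrix_inv (\<alpha> *\<^sub>R A) ** matrix_inv (\<alpha> *\<^sub>R A)) *v m)
      = (m \<bullet> e1)\<^sup>2 / (\<alpha> * l1)\<^sup>2 + (m \<bullet> e2)\<^sup>2 / (\<alpha> * l2)\<^sup>2"
    using assms \<open>l1 > 0\<close> \<open>l2 > 0\<close> by (intro diagonal_matrix_inv_square_quadratic_form) auto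
  have "wfr_contraction_constant c \<alpha> \<beta> A m H
      = 2 * (c * \<alpha> * l1 * (m \<bullet> e1)\<^sup>2) / (2 * c * \<alpha> * l1) ^ 3
      + 2 * (c * \<alpha> * l2 * (m \<bullet> e2)\<^sup>2) / (2 * c * \<alpha> * l2) ^ 3 + 2 * (c * \<beta> * H\<^sup>2) / (2 * c * \<beta>) ^ 3"
    unfolding wfr_contraction_constant_def quadratic_form
    using assms \<open>l1 > 0\<close> \<open>l2 > 0\<close> by (simp add: field_simps power2_eq_square power3_eq_cube)
  moreover have "2 * c * \<alpha> * l1 > 0" "2 * c * \<alpha> * l2 > 0"
    using assms \<open>l1 > 0\<close> \<open>l2 > 0\<close> by simp_all
  then have "2 * c * \<alpha> * l1 + r \<noteq> 0" "2 * c * \<alpha> * l2 + r \<noteq> 0" if "r \<ge> 0" for r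
    using that by (linarith, linarith)
  ultimately show ?thesis
    using assms \<open>l1 > 0\<close> \<open>l2 > 0\<close>
    by (intro that[of "c * \<alpha> * l1 * (m \<bullet> e1)\<^sup>2" "c * \<alpha> * l2 * (m \<bullet> e2)\<^sup>2" "c * \<beta> * H\<^sup>2"])
      (simp_all add: wfr_phi_eigen_form[OF A])
qed

lemma wfr_phi_lipschitz:
  assumes "c > 0" and "\<alpha> > 0" and "\<beta> > 0" and "spd2 A"
  shows "(wfr_contraction_constant c \<alpha> \<beta> A m H)-lipschitz_on {0..} (wfr_phi c \<alpha> \<beta> A \<rho> m H)"
proof -
  obtain a1 a2 a3 b1 b2 b3 where pos: "a1 \<ge> 0" "a2 \<ge> 0" "a3 \<ge> 0" "b1 > 0" "b2 > 0" "b3 > 0"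
    and phi: "\<And>r. r \<ge> 0 \<Longrightarrow>
      wfr_phi c \<alpha> \<beta> A \<rho> m H r = \<rho> + a1 / (b1 + r)\<^sup>2 + a2 / (b2 + r)\<^sup>2 + a3 / (b3 + r)\<^sup>2"
    and const: "wfr_contraction_constant c \<alpha> \<beta> A m H = 2 * a1 / b1 ^ 3 + 2 * a2 / b2 ^ 3 + 2 * a3 / b3 ^ 3"
    using wfr_phi_inverse_square_sum[OF assms, where \<rho> = \<rho> and m = m and H = H] by blast
  have "(0 + 2 * a1 / b1 ^ 3 + 2 * a2 / b2 ^ 3 + 2 * a3 / b3 ^ 3)-lipschitz_on {0..}
      (\<lambda>r. \<rho> + a1 / (b1 + r)\<^sup>2 + a2 / (b2 + r)\<^sup>2 + a3 / (b3 + r)\<^sup>2)"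
    using pos by (intro lipschitz_on_add lipschitz_on_constant weighted_inverse_square_shift_lipschitz)
  then show ?thesis
    by (simp add: const phi lipschitz_on_def)
qed

lemma wfr_phi_lower_bound:
  assumes "c > 0" and "\<alpha> > 0" and "\<beta> > 0" and "spd2 A" and "r \<ge> 0"
  shows "\<rho> \<le> wfr_phi c \<alpha> \<beta> A \<rho> m H r"
proof -
  obtain a1 a2 a3 b1 b2 b3 where "a1 \<ge> 0" "a2 \<ge> 0" "a3 \<ge> 0"
    and "\<And>r. r \<ge> 0 \<Longrightarrow>
      wfr_phi c \<alpha> \<beta> A \<rho> m H r = \<rho> + a1 / (b1 + r)\<^sup>2 + a2 / (b2 + r)\<^sup>2 + a3 / (b3 + r)\<^sup>2"
    using wfr_phi_inverse_square_sum[OF assms(1-4), where \<rho> = \<rho> and m = m and H = H] by metis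
  with \<open>r \<ge> 0\<close> show ?thesis
    by simp
qed

theorem mainTheorem15:
  fixes c \<alpha> \<beta> \<rho> H :: real and A :: "real^2^2" and m :: "real^2"
  assumes "c > 0" and "\<alpha> > 0" and "\<beta> > 0"
    and "spd2 A" and "\<rho> > 0"
    and "(1 / (4 * c\<^sup>2)) *
           (m \<bullet> ((matrix_inv (\<alpha> *\<^sub>R A) ** matrix_inv (\<alpha> *\<^sub>R A)) *v m)
            + inverse (\<beta>\<^sup>2) * H\<^sup>2) < 1"
  shows "\<exists>\<rho>s. \<rho>s > 0 \<and> wfr_phi c \<alpha> \<beta> A \<rho> m H \<rho>s = \<rho>s
           \<and> (\<forall>r. r > 0 \<and> wfr_phi c \<alpha> \<beta> A \<rho> m H r = r \<longrightarrow> r = \<rho>s)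
           \<and> (\<forall>\<rho>0. \<rho>0 > 0 \<longrightarrow>
                 (\<lambda>l. (wfr_phi c \<alpha> \<beta> A \<rho> m H ^^ l) \<rho>0) \<longlonglongrightarrow> \<rho>s)"
proof (rule contraction_of_nonneg_reals_fixpoint)
  show "(wfr_contraction_constant c \<alpha> \<beta> A m H)-lipschitz_on {0..} (wfr_phi c \<alpha> \<beta> A \<rho> m H)"
    using assms(1-4) by (rule wfr_phi_lipschitz)
  show "wfr_contraction_constant c \<alpha> \<beta> A m H < 1"
    using assms(6) unfolding wfr_contraction_constant_def .
  show "\<rho> \<le> wfr_phi c \<alpha> \<beta> A \<rho> m H r" if "r \<ge> 0" for r
    using assms(1-4) that by (rule wfr_phi_lower_bound)
qed fact

end
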